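(* Let $T_M>0$ and $c>0$. Let $f\in C^2(\mathbb R_+)\cap C_b(\mathbb R_+)$ be a solution of $$f''(y)-cf'(y)-f^4(y)=-\int_0^\infty E(y-\eta)f^4(\eta)\,d\eta\ (y>0),\qquad f(0)=T_M,\qquad f\ge 0,$$ with $|f|\le T_M$. Then $f(y)<T_M$ for all $y>0$ and $\partial_yf(0^+)<0$.
   Context: $E(x)=\frac12\int_{|x|}^\infty\frac{e^{-t}}{t}dt$; $\mathbb R_+=[0,\infty)$; $C_b$ denotes bounded continuous functions. *)

theory Defs
  imports "HOL-Analysis.Analysis"
begin

text \<open>Exponential-integral kernel E(x) = 1/2 * int_{|x|}^infty e^{-t}/t dt
  (at x = 0 the integral diverges; the value there is irrelevant, a null set).\<close>
definition E :: "real \<Rightarrow> real" where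
  "E x = (1/2) * integral {\<bar>x\<bar>..} (\<lambda>t. exp (- t) / t)"

end

theory Submission
  imports Defs "HOL-Real_Asymp.Real_Asymp"
begin

(* The kernel has mass 1 on the line but only 1 - E_2(y)/2 on the half-line as seen from y, where
   E_2 is the exponential integral of order 2: this mass is < 1 for y > 0 and tends to 1/2 as
   y -> 0+. Hence 0 <= f <= T_M gives f'' - c f' >= f^4 - T_M^4 (1 - E_2(y)/2). At an interior
   point with f = T_M we would have f' = 0 and f'' <= 0, whereas the right-hand side is
   T_M^4 E_2(y)/2 > 0. Near y = 0 the right-hand side tends to T_M^4/2 > 0; then f'(0) >= 0 would
   make e^(-cy) f' increasing, so f would rise above f(0) = T_M. *)

section \<open>Exponential integrals\<close>

(* E_n(s) = int_1^oo e^(-st)/t^n dt for n = 1, 2; the closed form of E_2 comes from integrating by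
   parts. *)
definition E1 :: "real \<Rightarrow> real" where
  "E1 s = integral {s..} (\<lambda>t. exp (- t) / t)"

definition E2 :: "real \<Rightarrow> real" where
  "E2 s = exp (- s) - s * E1 s"

lemma E_eq_E1: "E x = E1 \<bar>x\<bar> / 2"
  by (simp add: E_def E1_def)

lemma E1_integrable:
  fixes s :: real
  assumes "s > 0"
  shows "(\<lambda>t. exp (- t) / t) integrable_on {s..}"
proof (rule measurable_bounded_by_integrable_imp_integrable)
  show L: "{s..} \<in> sets lebesgue"
    by (rule lebesgue_closedin[of UNIV]) auto
  have "continuous_on {s..} (\<lambda>t. exp (- t) / t)"
    using assms by (intro continuous_on_divide continuous_intros) auto
  then show "(\<lambda>t. exp (- t) / t) \<in> borel_measurable (lebesgue_on {s..})"
    by (intro continuous_imp_measurable_on_sets_lebesgue L)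
  show "(\<lambda>t. exp (- 1 * t) / s) integrable_on {s..}"
    using integrable_on_divide[OF integrable_on_exp_minus_to_infinity[of 1 s], of s] by simp
  show "norm (exp (- t) / t) \<le> exp (- 1 * t) / s" if "t \<in> {s..}" for t
    using that assms by (auto simp: divide_simps)
qed

lemma E1_nonneg: "s \<ge> 0 \<Longrightarrow> E1 s \<ge> 0"
  unfolding E1_def
  by (cases "(\<lambda>t. exp (- t) / t) integrable_on {s..}")
     (auto intro!: integral_nonneg simp: not_integrable_integral)

lemma E_nonneg: "E x \<ge> 0"
  using E1_nonneg[of "\<bar>x\<bar>"] by (simp add: E_eq_E1)

lemma E1_le:
  assumes "s > 0"
  shows "E1 s \<le> exp (- s) / s"
proof -
  have "E1 s \<le> integral {s..} (\<lambda>t. exp (- 1 * t) / s)"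
    unfolding E1_def
  proof (rule integral_le)
    show "(\<lambda>t. exp (- 1 * t) / s) integrable_on {s..}"
      using integrable_on_divide[OF integrable_on_exp_minus_to_infinity[of 1 s], of s] by simp
  qed (use assms E1_integrable in \<open>auto simp: divide_simps\<close>)
  also have "\<dots> = exp (- s) / s"
    using integral_unique[OF has_integral_divide[OF has_integral_exp_minus_to_infinity[of 1 s], of s]]
    by simp
  finally show ?thesis .
qed

lemma E1_split:
  assumes "0 < s" "s \<le> b"
  shows "E1 s = integral {s..b} (\<lambda>t. exp (- t) / t) + E1 b"
proof -
  have tail: "((\<lambda>t. exp (- t) / t) has_integral E1 b) {b..}"
    using E1_integrable[of b] assms unfolding E1_def by (simp add: integrable_integral)
  have head: "((\<lambda>t. exp (- t) / t) has_integral integral {s..b} (\<lambda>t. exp (- t) / t)) {s..b}"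
    using assms by (intro integrable_integral integrable_continuous_interval continuous_intros) auto
  have "((\<lambda>t. exp (- t) / t) has_integral integral {s..b} (\<lambda>t. exp (- t) / t) + E1 b) ({s..b} \<union> {b..})"
    by (rule has_integral_Un[OF head tail]) (auto intro: negligible_subset[of "{b}"])
  moreover have "{s..b} \<union> {b..} = {s..}"
    using assms by auto
  ultimately show ?thesis
    unfolding E1_def by (simp add: integral_unique)
qed

lemma E1_has_real_derivative:
  assumes "s > 0"
  shows "(E1 has_real_derivative - (exp (- s) / s)) (at s)"
proof -
  let ?F = "\<lambda>t. exp (- t) / t"
  have "((\<lambda>x. integral {x..s+1} ?F) has_real_derivative - ?F s) (at s within {s/2..s+1})"
    using assms by (intro integral_has_real_derivative' continuous_intros) auto
  moreover have "at s within {s/2..s+1} = at s"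
    using assms by (intro at_within_interior) auto
  ultimately have "((\<lambda>x. integral {x..s+1} ?F + E1 (s+1)) has_real_derivative - ?F s) (at s)"
    by (auto intro!: derivative_eq_intros)
  then show ?thesis
  proof (rule has_field_derivative_transform_within_open[of _ _ _ "{s/2<..<s+1}"])
    show "integral {x..s+1} ?F + E1 (s+1) = E1 x" if "x \<in> {s/2<..<s+1}" for x
      using that assms by (intro E1_split[symmetric]) auto
  qed (use assms in auto)
qed

lemma E1_pos:
  assumes "s > 0"
  shows "E1 s > 0"
proof -
  have "E1 (s + 1) < E1 s"
  proof (rule DERIV_neg_imp_decreasing[of s "s + 1" E1])
    fix x assume "s \<le> x" "x \<le> s + 1"
    with assms show "\<exists>d. (E1 has_real_derivative d) (at x) \<and> d < 0"
      by (intro exI[of _ "- (exp (- x) / x)"] conjI E1_has_real_derivative) auto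
  qed simp
  then show ?thesis
    using E1_nonneg[of "s + 1"] assms by linarith
qed

lemma E1_le_ln:
  assumes "0 < s" "s \<le> 1"
  shows "E1 s \<le> E1 1 - ln s"
proof -
  have "E1 s + ln s \<le> E1 1 + ln 1"
  proof (rule DERIV_nonneg_imp_nondecreasing[OF assms(2)])
    fix x assume "s \<le> x" "x \<le> 1"
    then have "x > 0"
      using assms by auto
    then have "((\<lambda>x. E1 x + ln x) has_real_derivative - (exp (- x) / x) + 1 / x) (at x)"
      by (intro DERIV_add E1_has_real_derivative DERIV_ln_divide)
    moreover have "- (exp (- x) / x) + 1 / x \<ge> 0"
      using \<open>x > 0\<close> by (auto simp: field_simps)
    ultimately show "\<exists>y. ((\<lambda>x. E1 x + ln x) has_real_derivative y) (at x) \<and> 0 \<le> y"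
      by blast
  qed
  then show ?thesis
    by simp
qed

lemma E2_0 [simp]: "E2 0 = 1"
  by (simp add: E2_def)

lemma E2_has_real_derivative:
  assumes "s > 0"
  shows "(E2 has_real_derivative - E1 s) (at s)"
proof -
  have "((\<lambda>s. exp (- s) - s * E1 s) has_real_derivative
      - exp (- s) - (1 * E1 s + - (exp (- s) / s) * s)) (at s)"
    by (intro DERIV_diff DERIV_mult DERIV_ident E1_has_real_derivative assms)
      (auto intro!: derivative_eq_intros)
  then have "(E2 has_real_derivative - exp (- s) - (1 * E1 s + - (exp (- s) / s) * s)) (at s)"
    by (simp add: E2_def[abs_def])
  then show ?thesis
    using assms by simp
qed

lemma E2_le_exp: "s \<ge> 0 \<Longrightarrow> E2 s \<le> exp (- s)"
  using E1_nonneg[of s] by (simp add: E2_def)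

lemma E2_nonneg:
  assumes "s \<ge> 0"
  shows "E2 s \<ge> 0"
proof (cases "s = 0")
  case False
  with assms have "s * E1 s \<le> s * (exp (- s) / s)"
    by (intro mult_left_mono E1_le) auto
  with False show ?thesis
    by (simp add: E2_def)
qed simp

lemma E2_pos:
  assumes "s > 0"
  shows "E2 s > 0"
proof -
  have "E2 (s + 1) < E2 s"
  proof (rule DERIV_neg_imp_decreasing[of s "s + 1" E2])
    fix x assume "s \<le> x" "x \<le> s + 1"
    with assms show "\<exists>d. (E2 has_real_derivative d) (at x) \<and> d < 0"
      by (intro exI[of _ "- E1 x"] conjI E2_has_real_derivative) (auto simp: E1_pos)
  qed simp
  then show ?thesis
    using E2_nonneg[of "s + 1"] assms by linarith
qed

lemma tendsto_E2_at_right_0: "(E2 \<longlongrightarrow> 1) (at_right 0)"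
proof -
  have lim: "((\<lambda>s. s * (E1 1 - ln s)) \<longlongrightarrow> 0) (at_right 0)"
    by real_asymp
  have "\<forall>\<^sub>F s in at_right 0. 0 \<le> s * E1 s"
    by (intro eventually_mono[OF eventually_at_right_less]) (auto intro!: mult_nonneg_nonneg E1_nonneg)
  moreover have "\<forall>\<^sub>F s in at_right 0. s * E1 s \<le> s * (E1 1 - ln s)"
    unfolding eventually_at_right_field
    by (intro exI[of _ 1]) (auto intro!: mult_left_mono E1_le_ln)
  ultimately have "((\<lambda>s. s * E1 s) \<longlongrightarrow> 0) (at_right 0)"
    by (rule tendsto_sandwich[OF _ _ tendsto_const lim])
  then have "((\<lambda>s. exp (- s) - s * E1 s) \<longlongrightarrow> exp (- 0) - 0) (at_right 0)"
    by (intro tendsto_intros)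
  then show ?thesis
    by (simp add: E2_def[abs_def])
qed

lemma tendsto_E2_at_top: "(E2 \<longlongrightarrow> 0) at_top"
proof (rule tendsto_sandwich[of "\<lambda>_. 0" _ _ "\<lambda>s. exp (- s)"])
  show "\<forall>\<^sub>F s in at_top. 0 \<le> E2 s" "\<forall>\<^sub>F s in at_top. E2 s \<le> exp (- s)"
    by (auto intro: eventually_mono[OF eventually_ge_at_top[of 0]] E2_nonneg E2_le_exp)
qed (rule tendsto_const, real_asymp)

lemma continuous_on_E2: "continuous_on {0..} E2"
  unfolding continuous_on_eq_continuous_within
proof
  fix s :: real assume "s \<in> {0..}"
  show "continuous (at s within {0..}) E2"
  proof (cases "s = 0")
    case True
    then show ?thesis
      using tendsto_E2_at_right_0 by (simp add: continuous_within at_within_Ici_at_right)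
  next
    case False
    with \<open>s \<in> {0..}\<close> have "s > 0" by simp
    then show ?thesis
      by (rule continuous_at_imp_continuous_at_within[OF DERIV_isCont[OF E2_has_real_derivative]])
  qed
qed

section \<open>Mass of the kernel on the half-line\<close>

lemma has_integral_E_minus_below:
  assumes "0 \<le> y"
  shows "((\<lambda>\<eta>. E (y - \<eta>)) has_integral (1 - E2 y) / 2) {0..y}"
proof -
  have "((\<lambda>\<eta>. E (y - \<eta>)) has_integral E2 (y - y) / 2 - E2 (y - 0) / 2) {0..y}"
  proof (rule fundamental_theorem_of_calculus_interior[OF assms])
    have "continuous_on {0..y} (\<lambda>\<eta>. E2 (y - \<eta>))"
      by (intro continuous_on_compose2[OF continuous_on_E2] continuous_intros) auto
    then show "continuous_on {0..y} (\<lambda>\<eta>. E2 (y - \<eta>) / 2)"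
      by (intro continuous_intros) auto
    fix \<eta> assume \<eta>: "\<eta> \<in> {0<..<y}"
    have "((\<lambda>\<eta>. y - \<eta>) has_real_derivative - 1) (at \<eta>)"
      by (auto intro!: derivative_eq_intros)
    then have "((\<lambda>\<eta>. E2 (y - \<eta>) / 2) has_real_derivative - E1 (y - \<eta>) * - 1 / 2) (at \<eta>)"
      using \<eta> by (intro DERIV_cdivide DERIV_chain2[OF E2_has_real_derivative]) auto
    then show "((\<lambda>\<eta>. E2 (y - \<eta>) / 2) has_vector_derivative E (y - \<eta>)) (at \<eta>)"
      using \<eta> by (simp add: E_eq_E1 has_real_derivative_iff_has_vector_derivative)
  qed
  then show ?thesis
    by (simp add: diff_divide_distrib)
qed

lemma has_integral_E_minus_above:
  assumes "y \<le> b"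
  shows "((\<lambda>\<eta>. E (y - \<eta>)) has_integral (1 - E2 (b - y)) / 2) {y..b}"
proof -
  have "((\<lambda>\<eta>. E (y - \<eta>)) has_integral - E2 (b - y) / 2 - - E2 (y - y) / 2) {y..b}"
  proof (rule fundamental_theorem_of_calculus_interior[OF assms])
    have "continuous_on {y..b} (\<lambda>\<eta>. E2 (\<eta> - y))"
      by (intro continuous_on_compose2[OF continuous_on_E2] continuous_intros) auto
    then show "continuous_on {y..b} (\<lambda>\<eta>. - E2 (\<eta> - y) / 2)"
      by (intro continuous_intros) auto
    fix \<eta> assume \<eta>: "\<eta> \<in> {y<..<b}"
    have "((\<lambda>\<eta>. \<eta> - y) has_real_derivative 1) (at \<eta>)"
      by (auto intro!: derivative_eq_intros)
    then have "((\<lambda>\<eta>. - E2 (\<eta> - y) / 2) has_real_derivative - (- E1 (\<eta> - y) * 1) / 2) (at \<eta>)"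
      using \<eta> by (intro DERIV_cdivide DERIV_minus DERIV_chain2[OF E2_has_real_derivative]) auto
    then show "((\<lambda>\<eta>. - E2 (\<eta> - y) / 2) has_vector_derivative E (y - \<eta>)) (at \<eta>)"
      using \<eta> by (simp add: E_eq_E1 has_real_derivative_iff_has_vector_derivative)
  qed
  then show ?thesis
    by (simp add: diff_divide_distrib)
qed

lemma has_integral_E_minus:
  assumes "0 \<le> y"
  shows "((\<lambda>\<eta>. E (y - \<eta>)) has_integral 1 - E2 y / 2) {0..}"
proof -
  have "((\<lambda>\<eta>. E (y - \<eta>)) has_integral 1 / 2) {y..}"
  proof (rule has_integral_to_inf)
    show "(\<lambda>\<eta>. E (y - \<eta>)) integrable_on {y..b}" for b
      using has_integral_E_minus_above[of y b] by (cases "y \<le> b") auto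
    have "((\<lambda>b. (1 - E2 (b - y)) / 2) \<longlongrightarrow> (1 - 0) / 2) at_top"
      by (intro tendsto_intros filterlim_compose[OF tendsto_E2_at_top]) (real_asymp, simp)
    moreover have "\<forall>\<^sub>F b in at_top. (1 - E2 (b - y)) / 2 = integral {y..b} (\<lambda>\<eta>. E (y - \<eta>))"
      using eventually_ge_at_top[of y]
      by eventually_elim (use has_integral_E_minus_above integral_unique in metis)
    ultimately show "((\<lambda>b. integral {y..b} (\<lambda>\<eta>. E (y - \<eta>))) \<longlongrightarrow> 1 / 2) at_top"
      by (simp add: tendsto_cong)
  qed (rule E_nonneg)
  with has_integral_E_minus_below[OF assms]
  have "((\<lambda>\<eta>. E (y - \<eta>)) has_integral (1 - E2 y) / 2 + 1 / 2) ({0..y} \<union> {y..})"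
    by (rule has_integral_Un) (auto intro: negligible_subset[of "{y}"])
  moreover have "{0..y} \<union> {y..} = {0..}"
    using assms by auto
  ultimately show ?thesis
    by (simp add: field_simps)
qed

lemma integral_E_minus_le:
  assumes "0 \<le> y" and g: "\<And>\<eta>. \<eta> \<ge> 0 \<Longrightarrow> 0 \<le> g \<eta> \<and> g \<eta> \<le> M"
  shows "integral {0..} (\<lambda>\<eta>. E (y - \<eta>) * g \<eta>) \<le> M * (1 - E2 y / 2)"
proof (cases "(\<lambda>\<eta>. E (y - \<eta>) * g \<eta>) integrable_on {0..}")
  case True
  have "integral {0..} (\<lambda>\<eta>. E (y - \<eta>) * g \<eta>) \<le> (1 - E2 y / 2) * M"
  proof (rule has_integral_le[OF integrable_integral[OF True]
        has_integral_mult_left[OF has_integral_E_minus[OF assms(1)]]])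
    show "E (y - \<eta>) * g \<eta> \<le> E (y - \<eta>) * M" if "\<eta> \<in> {0..}" for \<eta>
      using g[of \<eta>] that by (intro mult_left_mono E_nonneg) auto
  qed
  then show ?thesis
    by (simp add: mult.commute)
next
  case False
  (* then the integral is 0 by convention *)
  have "E2 y \<le> 1"
    using E2_le_exp[OF assms(1)] exp_le_one_iff[of "- y"] assms(1) by linarith
  moreover have "M \<ge> 0"
    using g[of 0] by simp
  ultimately show ?thesis
    using False by (simp add: not_integrable_integral)
qed

section \<open>A maximum principle for f'' - c f'\<close>

(* f'' - c f' is e^(cy) times the derivative of e^(-cy) f', so f' stays positive right of a. *)
lemma less_if_deriv_nonneg_and_drift_pos:
  fixes f f' f'' :: "real \<Rightarrow> real"
  assumes "a < b"
    and f': "\<And>y. y \<in> {a..b} \<Longrightarrow> (f has_real_derivative f' y) (at y within {a..b})"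
    and f'': "\<And>y. y \<in> {a..b} \<Longrightarrow> (f' has_real_derivative f'' y) (at y within {a..b})"
    and "f' a \<ge> 0"
    and drift: "\<And>y. a < y \<Longrightarrow> y < b \<Longrightarrow> f'' y - c * f' y > 0"
  shows "f a < f b"
proof -
  have at_interior: "at y within {a..b} = at y" if "a < y" "y < b" for y
    using that by (intro at_within_interior) auto
  have f'_pos: "f' t > 0" if "a < t" "t \<le> b" for t
  proof -
    have "exp (- c * a) * f' a < exp (- c * t) * f' t"
    proof (rule DERIV_pos_imp_increasing_open[OF \<open>a < t\<close>])
      fix y assume "a < y" "y < t"
      then have "(f' has_real_derivative f'' y) (at y)"
        using f''[of y] at_interior[of y] that by auto
      then have "((\<lambda>y. exp (- c * y) * f' y) has_real_derivative
          exp (- c * y) * (- c) * f' y + f'' y * exp (- c * y)) (at y)"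
        by (intro DERIV_mult) (auto intro!: derivative_eq_intros)
      moreover have "exp (- c * y) * (- c) * f' y + f'' y * exp (- c * y)
          = exp (- c * y) * (f'' y - c * f' y)"
        by (simp add: algebra_simps)
      moreover have "exp (- c * y) * (f'' y - c * f' y) > 0"
        using drift[of y] \<open>a < y\<close> \<open>y < t\<close> that by simp
      ultimately show "\<exists>d. ((\<lambda>y. exp (- c * y) * f' y) has_real_derivative d) (at y) \<and> d > 0"
        by metis
    next
      have "continuous_on {a..b} f'"
        using f'' by (rule DERIV_continuous_on)
      then show "continuous_on {a..t} (\<lambda>y. exp (- c * y) * f' y)"
        using that by (intro continuous_intros) (auto elim: continuous_on_subset)
    qed
    moreover have "0 \<le> exp (- c * a) * f' a"
      using \<open>f' a \<ge> 0\<close> by simp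
    ultimately have "0 < exp (- c * t) * f' t"
      by linarith
    then show ?thesis
      by (simp add: zero_less_mult_iff)
  qed
  show ?thesis
  proof (rule DERIV_pos_imp_increasing_open[OF \<open>a < b\<close>])
    show "\<exists>d. (f has_real_derivative d) (at y) \<and> d > 0" if "a < y" "y < b" for y
      using f'[of y] at_interior[of y] f'_pos[of y] that by auto
  qed (use f' DERIV_continuous_on in blast)
qed

lemma deriv_neg_at_max_if_drift_pos:
  fixes f f' f'' :: "real \<Rightarrow> real"
  assumes f': "\<And>y. y \<ge> 0 \<Longrightarrow> (f has_real_derivative f' y) (at y within {0..})"
    and f'': "\<And>y. y \<ge> 0 \<Longrightarrow> (f' has_real_derivative f'' y) (at y within {0..})"
    and "0 \<le> a" and max: "\<And>y. y \<ge> 0 \<Longrightarrow> f y \<le> f a"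
    and "\<forall>\<^sub>F y in at_right a. f'' y - c * f' y > 0"
  shows "f' a < 0"
proof (rule ccontr)
  assume "\<not> f' a < 0"
  obtain b where "a < b" and drift: "\<And>y. a < y \<Longrightarrow> y < b \<Longrightarrow> f'' y - c * f' y > 0"
    using assms(5) unfolding eventually_at_right_field by auto
  have "f a < f b"
  proof (rule less_if_deriv_nonneg_and_drift_pos[where f = f and a = a and b = b and c = c])
    show "(f has_real_derivative f' y) (at y within {a..b})" if "y \<in> {a..b}" for y
      using that \<open>0 \<le> a\<close> by (intro DERIV_subset[OF f']) auto
    show "(f' has_real_derivative f'' y) (at y within {a..b})" if "y \<in> {a..b}" for y
      using that \<open>0 \<le> a\<close> by (intro DERIV_subset[OF f'']) auto
  qed (use \<open>a < b\<close> \<open>\<not> f' a < 0\<close> drift in auto)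
  with max[of b] \<open>a < b\<close> \<open>0 \<le> a\<close> show False
    by auto
qed

lemma drift_nonpos_at_interior_max:
  fixes f f' f'' :: "real \<Rightarrow> real"
  assumes f': "\<And>y. y \<ge> 0 \<Longrightarrow> (f has_real_derivative f' y) (at y within {0..})"
    and f'': "\<And>y. y \<ge> 0 \<Longrightarrow> (f' has_real_derivative f'' y) (at y within {0..})"
    and "continuous_on {0..} f''" and "y > 0" and max: "\<And>z. z \<ge> 0 \<Longrightarrow> f z \<le> f y"
  shows "f'' y - c * f' y \<le> 0"
proof (rule ccontr)
  assume "\<not> f'' y - c * f' y \<le> 0"
  have at_y: "at y within {0..} = at y"
    using \<open>y > 0\<close> by (intro at_within_interior) auto
  have "f' y = 0"
  proof (rule DERIV_local_max)
    show "(f has_real_derivative f' y) (at y)"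
      using f'[of y] at_y \<open>y > 0\<close> by simp
    show "\<forall>z. \<bar>y - z\<bar> < y \<longrightarrow> f z \<le> f y"
      using max by auto
  qed fact
  have "isCont f'' y"
    using continuous_on_interior[OF assms(3)] \<open>y > 0\<close> by auto
  moreover have "isCont f' y"
    using f''[of y] at_y \<open>y > 0\<close> by (auto intro: DERIV_isCont)
  ultimately have "((\<lambda>z. f'' z - c * f' z) \<longlongrightarrow> f'' y - c * f' y) (at y)"
    by (intro tendsto_intros) (auto simp: isCont_def)
  then have "\<forall>\<^sub>F z in at y. f'' z - c * f' z > 0"
    using \<open>\<not> f'' y - c * f' y \<le> 0\<close> by (intro order_tendstoD) auto
  then have drift_pos: "\<forall>\<^sub>F z in at_right y. f'' z - c * f' z > 0"
    by (simp add: eventually_at_split)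
  have "f' y < 0"
    by (rule deriv_neg_at_max_if_drift_pos[OF f' f'' less_imp_le[OF \<open>y > 0\<close>] max drift_pos])
  with \<open>f' y = 0\<close> show False
    by simp
qed

theorem lemma2p4:
  fixes f f' f'' :: "real \<Rightarrow> real" and T\<^sub>M c :: real
  assumes "T\<^sub>M > 0" and "c > 0"
    and "\<And>y. y \<ge> 0 \<Longrightarrow> (f has_real_derivative f' y) (at y within {0..})"
    and "\<And>y. y \<ge> 0 \<Longrightarrow> (f' has_real_derivative f'' y) (at y within {0..})"
    and "continuous_on {0..} f''"
    and "continuous_on {0..} f" and "bounded (f ` {0..})"
    and "\<And>y. y > 0 \<Longrightarrow>
          f'' y - c * f' y - f y ^ 4 = - integral {0..} (\<lambda>\<eta>. E (y - \<eta>) * f \<eta> ^ 4)"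
    and "f 0 = T\<^sub>M"
    and "\<And>y. y \<ge> 0 \<Longrightarrow> f y \<ge> 0"
    and "\<And>y. y \<ge> 0 \<Longrightarrow> \<bar>f y\<bar> \<le> T\<^sub>M"
  shows "(\<forall>y>0. f y < T\<^sub>M) \<and> f' 0 < 0"
proof -
  note f' = assms(3) and f'' = assms(4)
  have bounds: "0 \<le> f \<eta> \<and> f \<eta> \<le> T\<^sub>M" if "\<eta> \<ge> 0" for \<eta>
    using assms(10,11)[OF that] by auto
  have drift: "f y ^ 4 - T\<^sub>M ^ 4 * (1 - E2 y / 2) \<le> f'' y - c * f' y" if "y > 0" for y
  proof -
    have "integral {0..} (\<lambda>\<eta>. E (y - \<eta>) * f \<eta> ^ 4) \<le> T\<^sub>M ^ 4 * (1 - E2 y / 2)"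
      using that bounds by (intro integral_E_minus_le) (auto intro: power_mono)
    then show ?thesis
      using assms(8)[OF that] by linarith
  qed
  have "f y < T\<^sub>M" if "y > 0" for y
  proof (rule ccontr)
    assume "\<not> f y < T\<^sub>M"
    then have "f y = T\<^sub>M"
      using bounds[of y] that by auto
    then have "f'' y - c * f' y \<le> 0"
      using bounds that by (intro drift_nonpos_at_interior_max[OF f' f'' assms(5)]) auto
    moreover have "0 < T\<^sub>M ^ 4 * E2 y / 2"
      using assms(1) E2_pos[OF that] by simp
    ultimately show False
      using drift[OF that] \<open>f y = T\<^sub>M\<close> by (simp add: algebra_simps)
  qed
  moreover have "f' 0 < 0"
  proof (rule deriv_neg_at_max_if_drift_pos[OF f' f''])
    have "(f \<longlongrightarrow> T\<^sub>M) (at_right 0)"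
      using assms(6,9) by (auto simp: continuous_on_def simp flip: at_within_Ici_at_right)
    then have "((\<lambda>y. f y ^ 4 - T\<^sub>M ^ 4 * (1 - E2 y / 2)) \<longlongrightarrow> T\<^sub>M ^ 4 - T\<^sub>M ^ 4 * (1 - 1 / 2))
        (at_right 0)"
      by (intro tendsto_intros tendsto_E2_at_right_0) auto
    then have "\<forall>\<^sub>F y in at_right 0. f y ^ 4 - T\<^sub>M ^ 4 * (1 - E2 y / 2) > 0"
      by (rule order_tendstoD) (use assms(1) in simp)
    then show "\<forall>\<^sub>F y in at_right 0. f'' y - c * f' y > 0"
      using eventually_at_right_less[of 0] by eventually_elim (use drift in fastforce)
  qed (use bounds assms(9) in auto)
  ultimately show ?thesis
    by blast
qed

end
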